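(* Let $a$ be a fixed positive integer. For any positive integers $k,n$ with $k\ge n$, $$S_t(N_{k,n})=\sum_{i=1}^n\binom{k-i}{k-n}t^{n-i}N_{k,i}.$$
   Context: $\mathfrak{h}_t=\mathbb{Q}[t]\langle x,y\rangle$, $z_k=x^{k-1}y$. For $k\ge n\ge1$, $N_{k,n}=\sum_{k_1+\cdots+k_n=k,\ k_i\ge1}z_{ak_1}\cdots z_{ak_n}$. $\sigma_t$ is the algebra automorphism of $\mathfrak{h}_t$ with $\sigma_t(x)=x,\sigma_t(y)=tx+y$, and $S_t$ is the $\mathbb{Q}[t]$-linear map with $S_t(1)=1$, $S_t(wa)=\sigma_t(w)a$ for words $w$ and letters $a\in\{x,y\}$. *)

theory Defs
  imports "HOL-Library.Poly_Mapping" "HOL-Computational_Algebra.Polynomial"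
begin

text \<open>The free algebra h_t = Q[t]<x,y>: finitely supported maps from words over {x,y}
  to Q[t], with concatenation (convolution) product.\<close>

datatype letter = X | Y

type_synonym ht = "letter list \<Rightarrow>\<^sub>0 rat poly"

definition word :: "letter list \<Rightarrow> ht" where
  "word w = Poly_Mapping.single w 1"

definition hmul :: "ht \<Rightarrow> ht \<Rightarrow> ht" where
  "hmul f g = (\<Sum>u\<in>Poly_Mapping.keys f. \<Sum>v\<in>Poly_Mapping.keys g.
      Poly_Mapping.single (u @ v) (Poly_Mapping.lookup f u * Poly_Mapping.lookup g v))"

definition hscale :: "rat poly \<Rightarrow> ht \<Rightarrow> ht" where
  "hscale c f = hmul (Poly_Mapping.single [] c) f"

definition tvar :: "rat poly" where "tvar = [:0, 1:]"

definition z :: "nat \<Rightarrow> ht" where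
  "z k = word (replicate (k - 1) X @ [Y])"

fun sigma_letter :: "letter \<Rightarrow> ht" where
  "sigma_letter X = word [X]"
| "sigma_letter Y = hscale tvar (word [X]) + word [Y]"

definition sigma_word :: "letter list \<Rightarrow> ht" where
  "sigma_word w = foldr (\<lambda>l acc. hmul (sigma_letter l) acc) w (word [])"

definition sigma :: "ht \<Rightarrow> ht" where
  "sigma f = (\<Sum>w\<in>Poly_Mapping.keys f. hscale (Poly_Mapping.lookup f w) (sigma_word w))"

definition S_word :: "letter list \<Rightarrow> ht" where
  "S_word w = (if w = [] then word []
               else hmul (sigma (word (butlast w))) (word [last w]))"

definition S :: "ht \<Rightarrow> ht" where
  "S f = (\<Sum>w\<in>Poly_Mapping.keys f. hscale (Poly_Mapping.lookup f w) (S_word w))"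

definition N :: "nat \<Rightarrow> nat \<Rightarrow> nat \<Rightarrow> ht" where
  "N a k n = (\<Sum>c\<in>{c :: nat list. length c = n \<and> (\<forall>i\<in>set c. 1 \<le> i) \<and> sum_list c = k}.
      foldr (\<lambda>ki acc. hmul (z (a * ki)) acc) c (word []))"

end

theory Submission
  imports Defs
begin

text \<open>Splitting off the first part of a composition gives the recursion
  N(k+1,n+1) = z_a N(k,n) + x^a N(k,n+1), according to whether that part is 1 or larger.
  Every word of N(k,n) with n \<ge> 1 is nonempty, so S(w f) = \<sigma>(w) S(f) applies to both terms;
  since \<sigma>(x^a) = x^a and \<sigma>(z_a) = t x^a + z_a, induction on k reduces the claim to Pascal's
  rule for the coefficients, written as ((k-i) choose (n-i)) t^(n-i).\<close>

text \<open>With concatenation as the monoid operation on words, ht becomes an instance of the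
  convolution ring of Poly_Mapping, and hmul is its product.\<close>

instantiation list :: (type) monoid_add
begin
definition zero_list :: "'a list" where "zero_list = []"
definition plus_list :: "'a list \<Rightarrow> 'a list \<Rightarrow> 'a list" where "plus_list u v = u @ v"
instance by standard (auto simp: zero_list_def plus_list_def)
end

lemma plus_list_eq_append [simp]: "(u :: 'a list) + v = u @ v"
  by (simp add: plus_list_def)

lemma zero_list_eq_Nil [simp]: "(0 :: 'a list) = []"
  by (simp add: zero_list_def)

lemma poly_mapping_eq_sum_single:
  "(f :: 'a \<Rightarrow>\<^sub>0 'b :: comm_monoid_add) =
     (\<Sum>u\<in>Poly_Mapping.keys f. Poly_Mapping.single u (Poly_Mapping.lookup f u))"
  by (rule poly_mapping_eqI)
     (auto simp: lookup_sum lookup_single when_def in_keys_iff sum.delta' split: if_splits)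

lemma single_zero_mult_commute:
  fixes f :: "'a :: monoid_add \<Rightarrow>\<^sub>0 'b :: comm_semiring_0"
  shows "Poly_Mapping.single 0 c * f = f * Poly_Mapping.single 0 c"
proof -
  have "Poly_Mapping.single 0 c
      * (\<Sum>u\<in>Poly_Mapping.keys f. Poly_Mapping.single u (Poly_Mapping.lookup f u))
    = (\<Sum>u\<in>Poly_Mapping.keys f. Poly_Mapping.single u (Poly_Mapping.lookup f u))
      * Poly_Mapping.single 0 c"
    unfolding sum_distrib_left sum_distrib_right
    by (intro sum.cong refl) (simp add: mult_single mult.commute)
  then show ?thesis
    by (simp flip: poly_mapping_eq_sum_single)
qed

lemma hmul_eq_times: "hmul f g = f * g"
proof -
  have "f * g = (\<Sum>u\<in>Poly_Mapping.keys f. Poly_Mapping.single u (Poly_Mapping.lookup f u))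
              * (\<Sum>v\<in>Poly_Mapping.keys g. Poly_Mapping.single v (Poly_Mapping.lookup g v))"
    by (simp flip: poly_mapping_eq_sum_single)
  also have "\<dots> = hmul f g"
    by (simp add: hmul_def sum_distrib_left sum_distrib_right mult_single
        sum.swap[of _ "Poly_Mapping.keys g"])
  finally show ?thesis ..
qed

abbreviation scalar :: "rat poly \<Rightarrow> ht" where
  "scalar c \<equiv> Poly_Mapping.single [] c"

lemma hscale_eq_scalar_times: "hscale c f = scalar c * f"
  by (simp add: hscale_def hmul_eq_times)

lemma scalar_one: "scalar 1 = 1"
  by (metis single_one zero_list_eq_Nil)

lemma scalar_mult_commute: "scalar c * f = f * scalar c"
  using single_zero_mult_commute[of c f] by simp

lemma scalar_mult_left_commute: "f * (scalar c * g) = scalar c * (f * g)"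
  by (simp only: mult.assoc[symmetric] scalar_mult_commute[of c f])

lemma scalar_mult: "scalar (c * d) = scalar c * scalar d"
  by (simp add: mult_single)

lemma word_Nil: "word [] = 1"
  by (simp add: word_def scalar_one)

lemma word_mult_word: "word u * word v = word (u @ v)"
  by (simp add: word_def mult_single)

definition xpow :: "nat \<Rightarrow> ht" where
  "xpow m = word (replicate m X)"

definition lin_ext :: "(letter list \<Rightarrow> ht) \<Rightarrow> ht \<Rightarrow> ht" where
  "lin_ext F f = (\<Sum>w\<in>Poly_Mapping.keys f. scalar (Poly_Mapping.lookup f w) * F w)"

lemma sigma_eq_lin_ext: "sigma = lin_ext sigma_word"
  by (rule ext) (simp add: sigma_def lin_ext_def hscale_eq_scalar_times)

lemma S_eq_lin_ext: "S = lin_ext S_word"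
  by (rule ext) (simp add: S_def lin_ext_def hscale_eq_scalar_times)

lemma lin_ext_superset:
  assumes "finite A" "Poly_Mapping.keys f \<subseteq> A"
  shows "lin_ext F f = (\<Sum>w\<in>A. scalar (Poly_Mapping.lookup f w) * F w)"
  unfolding lin_ext_def
  by (rule sum.mono_neutral_left) (use assms in \<open>auto simp: in_keys_iff\<close>)

lemma lin_ext_add: "lin_ext F (f + g) = lin_ext F f + lin_ext F g"
proof -
  let ?A = "Poly_Mapping.keys f \<union> Poly_Mapping.keys g"
  have "lin_ext F (f + g) = (\<Sum>w\<in>?A. scalar (Poly_Mapping.lookup (f + g) w) * F w)"
    by (rule lin_ext_superset) (auto dest: keys_add[THEN subsetD])
  also have "\<dots> = (\<Sum>w\<in>?A. scalar (Poly_Mapping.lookup f w) * F w)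
                + (\<Sum>w\<in>?A. scalar (Poly_Mapping.lookup g w) * F w)"
    by (simp add: lookup_add single_add distrib_right sum.distrib)
  also have "\<dots> = lin_ext F f + lin_ext F g"
    using lin_ext_superset[of ?A f F] lin_ext_superset[of ?A g F] by simp
  finally show ?thesis .
qed

lemma lin_ext_0: "lin_ext F 0 = 0"
  by (simp add: lin_ext_def)

lemma lin_ext_sum: "lin_ext F (\<Sum>i\<in>I. f i) = (\<Sum>i\<in>I. lin_ext F (f i))"
  by (induction I rule: infinite_finite_induct) (simp_all add: lin_ext_0 lin_ext_add)

lemma lin_ext_single: "lin_ext F (Poly_Mapping.single u c) = scalar c * F u"
  by (simp add: lin_ext_def)

lemma lin_ext_word: "lin_ext F (word u) = F u"
  by (simp add: word_def lin_ext_single scalar_one)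

lemma sigma_word_Nil: "sigma_word [] = 1"
  by (simp add: sigma_word_def word_Nil)

lemma sigma_word_Cons: "sigma_word (l # u) = sigma_letter l * sigma_word u"
  by (simp add: sigma_word_def hmul_eq_times)

lemma sigma_word_append: "sigma_word (u @ v) = sigma_word u * sigma_word v"
  by (induction u) (simp_all add: sigma_word_Nil sigma_word_Cons mult.assoc)

lemma sigma_word: "sigma (word u) = sigma_word u"
  by (simp add: sigma_eq_lin_ext lin_ext_word)

lemma sigma_xpow: "sigma (xpow m) = xpow m"
  unfolding xpow_def sigma_word
  by (induction m) (simp_all add: sigma_word_Nil sigma_word_Cons word_Nil word_mult_word)

lemma sigma_z:
  assumes "0 < a"
  shows "sigma (z a) = scalar tvar * xpow a + z a"
proof -
  have "replicate (a - 1) X @ [X] = replicate a X"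
    using assms by (cases a) (simp_all add: replicate_append_same)
  then show ?thesis
    using sigma_xpow[of "a - 1"]
    by (simp add: z_def sigma_word sigma_word_append sigma_word_Cons sigma_word_Nil
        hscale_eq_scalar_times xpow_def distrib_left scalar_mult_left_commute word_mult_word)
qed

lemma S_word: "S (word w) = S_word w"
  by (simp add: S_eq_lin_ext lin_ext_word)

lemma S_word_append: "v \<noteq> [] \<Longrightarrow> S_word (u @ v) = sigma (word u) * S_word v"
  by (simp add: S_word_def butlast_append sigma_word sigma_word_append hmul_eq_times mult.assoc)

lemma S_z: "S (z m) = z m"
  using sigma_xpow[of "m - 1"]
  by (simp add: z_def S_word S_word_def hmul_eq_times xpow_def word_mult_word)

lemma S_word_mult:
  assumes "[] \<notin> Poly_Mapping.keys f"
  shows "S (word u * f) = sigma (word u) * S f"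
proof -
  let ?c = "Poly_Mapping.lookup f"
  have S_append: "S_word (u @ w) = sigma (word u) * S_word w" if "w \<in> Poly_Mapping.keys f" for w
    using that assms by (intro S_word_append) auto
  have "S (word u * f) = (\<Sum>w\<in>Poly_Mapping.keys f. scalar (?c w) * S_word (u @ w))"
    by (subst poly_mapping_eq_sum_single)
       (simp add: sum_distrib_left word_def mult_single S_eq_lin_ext lin_ext_sum lin_ext_single)
  also have "\<dots> = (\<Sum>w\<in>Poly_Mapping.keys f. sigma (word u) * (scalar (?c w) * S_word w))"
    by (rule sum.cong) (simp_all add: S_append scalar_mult_left_commute)
  also have "\<dots> = sigma (word u) * S f"
    by (simp add: S_eq_lin_ext lin_ext_def sum_distrib_left)
  finally show ?thesis .
qed

definition compositions :: "nat \<Rightarrow> nat \<Rightarrow> nat list set" where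
  "compositions k n = {c. length c = n \<and> (\<forall>i\<in>set c. 1 \<le> i) \<and> sum_list c = k}"

definition comp_word :: "nat \<Rightarrow> nat list \<Rightarrow> letter list" where
  "comp_word a c = concat (map (\<lambda>j. replicate (a * j - 1) X @ [Y]) c)"

lemma N_eq_sum_compositions: "N a k n = (\<Sum>c\<in>compositions k n. word (comp_word a c))"
proof -
  have "foldr (\<lambda>ki acc. hmul (z (a * ki)) acc) c (word []) = word (comp_word a c)" for c
    by (induction c) (simp_all add: comp_word_def hmul_eq_times z_def word_mult_word)
  then show ?thesis
    by (simp add: N_def compositions_def)
qed

lemma finite_compositions: "finite (compositions k n)"
proof (rule finite_subset)
  show "compositions k n \<subseteq> {c. set c \<subseteq> {0..k} \<and> length c = n}"
    by (auto simp: compositions_def member_le_sum_list)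
qed (rule finite_lists_length_eq, simp)

lemma length_le_sum_list: "\<forall>i\<in>set c. 1 \<le> i \<Longrightarrow> length c \<le> sum_list (c :: nat list)"
  by (induction c) auto

lemma compositions_eq_empty: "k < n \<Longrightarrow> compositions k n = {}"
  unfolding compositions_def using length_le_sum_list by fastforce

lemma N_eq_0: "k < n \<Longrightarrow> N a k n = 0"
  by (simp add: N_eq_sum_compositions compositions_eq_empty)

lemma N_0: "N a k 0 = (if k = 0 then 1 else 0)"
proof -
  have "compositions k 0 = (if k = 0 then {[]} else {})"
    by (auto simp: compositions_def)
  then show ?thesis
    by (simp add: N_eq_sum_compositions comp_word_def word_Nil)
qed

lemma N_1: "1 \<le> k \<Longrightarrow> N a k 1 = z (a * k)"
proof -
  assume "1 \<le> k"
  then have "compositions k 1 = {[k]}"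
    by (auto simp: compositions_def length_Suc_conv)
  then show ?thesis
    by (simp add: N_eq_sum_compositions comp_word_def z_def)
qed

lemma Nil_notin_keys_N:
  assumes "1 \<le> n"
  shows "[] \<notin> Poly_Mapping.keys (N a k n)"
proof
  assume "[] \<in> Poly_Mapping.keys (N a k n)"
  then have "[] \<in> (\<Union>c\<in>compositions k n. Poly_Mapping.keys (word (comp_word a c)))"
    unfolding N_eq_sum_compositions by (rule subsetD[OF keys_sum])
  then obtain c where c: "c \<in> compositions k n" and "comp_word a c = []"
    by (auto simp: word_def)
  moreover from c assms obtain h r where "c = h # r"
    by (cases c) (auto simp: compositions_def)
  ultimately show False
    by (simp add: comp_word_def)
qed

definition incr_hd :: "nat list \<Rightarrow> nat list" where
  "incr_hd c = Suc (hd c) # tl c"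

lemma compositions_Suc_Suc:
  "compositions (Suc k) (Suc n) = Cons 1 ` compositions k n \<union> incr_hd ` compositions k (Suc n)"
proof (intro set_eqI iffI)
  fix c assume "c \<in> compositions (Suc k) (Suc n)"
  then obtain h r where c: "c = h # r" and "1 \<le> h" "h + sum_list r = Suc k"
      "length r = n" "\<forall>i\<in>set r. 1 \<le> i"
    by (auto simp: compositions_def length_Suc_conv)
  then have "c = 1 # r \<and> r \<in> compositions k n
      \<or> c = incr_hd ((h - 1) # r) \<and> (h - 1) # r \<in> compositions k (Suc n)"
    by (cases "h = 1") (auto simp: compositions_def incr_hd_def)
  then show "c \<in> Cons 1 ` compositions k n \<union> incr_hd ` compositions k (Suc n)"
    by blast
next
  have "incr_hd d \<in> compositions (Suc k) (Suc n)" if "d \<in> compositions k (Suc n)" for d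
    using that by (cases d) (auto simp: compositions_def incr_hd_def)
  then show "c \<in> compositions (Suc k) (Suc n)"
    if "c \<in> Cons 1 ` compositions k n \<union> incr_hd ` compositions k (Suc n)" for c
    using that by (auto simp: compositions_def)
qed

lemma N_Suc_Suc:
  assumes "0 < a"
  shows "N a (Suc k) (Suc n) = z a * N a k n + xpow a * N a k (Suc n)"
proof -
  have disjoint: "Cons 1 ` compositions k n \<inter> incr_hd ` compositions k (Suc n) = {}"
  proof -
    have "hd (incr_hd d) \<noteq> 1" if "d \<in> compositions k (Suc n)" for d
      using that by (cases d) (auto simp: compositions_def incr_hd_def)
    then show ?thesis
      by (fastforce dest: arg_cong[where f = hd])
  qed
  have inj: "inj_on incr_hd (compositions k (Suc n))"
  proof (rule inj_onI)
    fix c d assume "c \<in> compositions k (Suc n)" "d \<in> compositions k (Suc n)" "incr_hd c = incr_hd d"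
    then show "c = d"
      by (cases c; cases d) (auto simp: compositions_def incr_hd_def)
  qed
  have word_Cons_1: "word (comp_word a (1 # c)) = z a * word (comp_word a c)" for c
    by (simp add: comp_word_def z_def word_mult_word)
  have word_incr_hd: "word (comp_word a (incr_hd c)) = xpow a * word (comp_word a c)"
    if c_comp: "c \<in> compositions k (Suc n)" for c
  proof -
    obtain h r where c: "c = h # r" "1 \<le> h"
      using c_comp by (cases c) (auto simp: compositions_def)
    with assms have "a * Suc h - 1 = a + (a * h - 1)"
      by (simp add: Suc_le_eq)
    then show ?thesis
      using c by (simp add: comp_word_def incr_hd_def xpow_def word_mult_word replicate_add)
  qed
  have "N a (Suc k) (Suc n) = (\<Sum>c\<in>Cons 1 ` compositions k n. word (comp_word a c))
      + (\<Sum>c\<in>incr_hd ` compositions k (Suc n). word (comp_word a c))"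
    unfolding N_eq_sum_compositions compositions_Suc_Suc
    by (rule sum.union_disjoint[OF _ _ disjoint]) (simp_all add: finite_compositions)
  also have "\<dots> = (\<Sum>c\<in>compositions k n. word (comp_word a (1 # c)))
      + (\<Sum>c\<in>compositions k (Suc n). word (comp_word a (incr_hd c)))"
    by (simp add: sum.reindex inj)
  also have "\<dots> = z a * N a k n + xpow a * N a k (Suc n)"
    by (simp add: N_eq_sum_compositions word_Cons_1[simplified] word_incr_hd sum_distrib_left
        cong: sum.cong)
  finally show ?thesis .
qed

lemma S_N_Suc_Suc:
  assumes "0 < a" "1 \<le> n"
  shows "S (N a (Suc k) (Suc n))
    = (scalar tvar * xpow a + z a) * S (N a k n) + xpow a * S (N a k (Suc n))"
proof -
  have "S (z a * N a k n) = sigma (z a) * S (N a k n)"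
    unfolding z_def by (rule S_word_mult) (rule Nil_notin_keys_N[OF assms(2)])
  moreover have "S (xpow a * N a k (Suc n)) = sigma (xpow a) * S (N a k (Suc n))"
    unfolding xpow_def by (rule S_word_mult) (simp add: Nil_notin_keys_N)
  ultimately show ?thesis
    by (simp add: N_Suc_Suc[OF assms(1)] S_eq_lin_ext lin_ext_add sigma_xpow sigma_z[OF assms(1)])
qed

definition bcoeff :: "nat \<Rightarrow> nat \<Rightarrow> nat \<Rightarrow> rat poly" where
  "bcoeff k n i = of_nat ((k - i) choose (n - i)) * tvar ^ (n - i)"

definition N_expansion :: "nat \<Rightarrow> nat \<Rightarrow> nat \<Rightarrow> ht" where
  "N_expansion a k n = (\<Sum>i = 1..n. scalar (bcoeff k n i) * N a k i)"

lemma bcoeff_diag: "bcoeff k n n = 1"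
  by (simp add: bcoeff_def)

lemma bcoeff_Suc_Suc_Suc: "bcoeff (Suc k) (Suc n) (Suc i) = bcoeff k n i"
  by (simp add: bcoeff_def)

lemma bcoeff_pascal:
  assumes "i \<le> k" "i \<le> n"
  shows "bcoeff (Suc k) (Suc n) i = bcoeff k (Suc n) i + tvar * bcoeff k n i"
proof -
  have "Suc k - i = Suc (k - i)" "Suc n - i = Suc (n - i)"
    using assms by auto
  then show ?thesis
    by (simp add: bcoeff_def algebra_simps)
qed

lemma N_expansion_z_part:
  assumes "1 \<le> n"
  shows "(\<Sum>i = 1..Suc n. scalar (bcoeff (Suc k) (Suc n) i) * (z a * N a k (i - 1)))
    = z a * N_expansion a k n"
proof -
  have "(\<Sum>i = 1..Suc n. scalar (bcoeff (Suc k) (Suc n) i) * (z a * N a k (i - 1)))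
      = scalar (bcoeff (Suc k) (Suc n) 1) * (z a * N a k 0)
        + (\<Sum>i = Suc 1..Suc n. scalar (bcoeff (Suc k) (Suc n) i) * (z a * N a k (i - 1)))"
    by (subst sum.atLeast_Suc_atMost) simp_all
  also have "scalar (bcoeff (Suc k) (Suc n) 1) * (z a * N a k 0) = 0"
    using assms by (cases k; cases n) (simp_all add: N_0 bcoeff_def)
  also have "(\<Sum>i = Suc 1..Suc n. scalar (bcoeff (Suc k) (Suc n) i) * (z a * N a k (i - 1)))
      = (\<Sum>j = 1..n. scalar (bcoeff k n j) * (z a * N a k j))"
    by (simp only: sum.shift_bounds_cl_Suc_ivl) (simp add: bcoeff_Suc_Suc_Suc)
  finally show ?thesis
    by (simp add: N_expansion_def sum_distrib_left scalar_mult_left_commute)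
qed

lemma N_expansion_xpow_part:
  "(\<Sum>i = 1..Suc n. scalar (bcoeff (Suc k) (Suc n) i) * (xpow a * N a k i))
    = xpow a * N_expansion a k (Suc n) + scalar tvar * xpow a * N_expansion a k n"
proof -
  have split: "scalar (bcoeff (Suc k) (Suc n) i) * (xpow a * N a k i)
      = scalar (bcoeff k (Suc n) i) * (xpow a * N a k i)
        + scalar tvar * xpow a * (scalar (bcoeff k n i) * N a k i)"
    if "i \<in> {1..n}" for i
  proof (cases "k < i")
    case True
    then show ?thesis by (simp add: N_eq_0)
  next
    case False
    have "scalar (tvar * bcoeff k n i) * (xpow a * N a k i)
        = scalar tvar * xpow a * (scalar (bcoeff k n i) * N a k i)"
      by (simp only: scalar_mult mult.assoc scalar_mult_left_commute[of "xpow a"])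
    with that False show ?thesis
      by (simp add: bcoeff_pascal single_add distrib_right)
  qed
  have "(\<Sum>i = 1..Suc n. scalar (bcoeff (Suc k) (Suc n) i) * (xpow a * N a k i))
      = (\<Sum>i = 1..n. scalar (bcoeff (Suc k) (Suc n) i) * (xpow a * N a k i))
        + xpow a * N a k (Suc n)"
    by (simp add: bcoeff_diag scalar_one)
  also have "\<dots> = ((\<Sum>i = 1..n. scalar (bcoeff k (Suc n) i) * (xpow a * N a k i))
        + xpow a * N a k (Suc n)) + scalar tvar * xpow a * N_expansion a k n"
    by (simp add: split sum.distrib N_expansion_def sum_distrib_left)
  also have "(\<Sum>i = 1..n. scalar (bcoeff k (Suc n) i) * (xpow a * N a k i))
        + xpow a * N a k (Suc n) = xpow a * N_expansion a k (Suc n)"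
    by (simp add: N_expansion_def distrib_left sum_distrib_left scalar_mult_left_commute[of "xpow a"]
        bcoeff_diag scalar_one)
  finally show ?thesis .
qed

lemma N_expansion_Suc_Suc:
  assumes "0 < a" "1 \<le> n"
  shows "N_expansion a (Suc k) (Suc n)
    = (scalar tvar * xpow a + z a) * N_expansion a k n + xpow a * N_expansion a k (Suc n)"
proof -
  have "N_expansion a (Suc k) (Suc n)
      = (\<Sum>i = 1..Suc n. scalar (bcoeff (Suc k) (Suc n) i) * (z a * N a k (i - 1)))
        + (\<Sum>i = 1..Suc n. scalar (bcoeff (Suc k) (Suc n) i) * (xpow a * N a k i))"
    unfolding N_expansion_def sum.distrib[symmetric]
    by (rule sum.cong) (auto simp: N_Suc_Suc[OF assms(1)] distrib_left dest!: Suc_le_D)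
  also have "\<dots> = (scalar tvar * xpow a + z a) * N_expansion a k n + xpow a * N_expansion a k (Suc n)"
    by (simp only: N_expansion_z_part[OF assms(2)] N_expansion_xpow_part) (simp add: distrib_right)
  finally show ?thesis .
qed

lemma S_N_eq_N_expansion:
  assumes "0 < a" "1 \<le> n"
  shows "S (N a k n) = N_expansion a k n"
  using assms(2)
proof (induction k arbitrary: n)
  case 0
  then show ?case
    by (simp add: N_eq_0 S_eq_lin_ext lin_ext_0 N_expansion_def)
next
  case (Suc k)
  show ?case
  proof (cases "n = 1")
    case True
    have "N a (Suc k) 1 = z (a * Suc k)"
      by (rule N_1) simp
    with True show ?thesis
      by (simp add: S_z N_expansion_def bcoeff_diag scalar_one)
  next
    case False
    with Suc.prems obtain m where "n = Suc m" "1 \<le> m"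
      by (cases n) auto
    then show ?thesis
      by (simp add: S_N_Suc_Suc N_expansion_Suc_Suc assms(1) Suc.IH)
  qed
qed

theorem proposition4p10:
  fixes a k n :: nat
  assumes "0 < a" and "1 \<le> n" and "n \<le> k"
  shows "S (N a k n) =
    (\<Sum>i = 1..n. hscale (of_nat ((k - i) choose (k - n)) * tvar ^ (n - i)) (N a k i))"
proof -
  have "bcoeff k n i = of_nat ((k - i) choose (k - n)) * tvar ^ (n - i)" if "i \<in> {1..n}" for i
  proof -
    have "(k - i) choose (n - i) = (k - i) choose ((k - i) - (n - i))"
      using that assms(3) by (intro binomial_symmetric) auto
    also have "(k - i) - (n - i) = k - n"
      using that assms(3) by auto
    finally show ?thesis
      by (simp add: bcoeff_def)
  qed
  then show ?thesis
    using S_N_eq_N_expansion[OF assms(1,2)]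
    by (simp add: N_expansion_def hscale_eq_scalar_times)
qed

end
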